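(* Let $1\le N_a<N_b$, $\mathcal N=N_a+N_b$, real $\kappa_1<\dots<\kappa_{\mathcal N}$ with indices taken modulo $\mathcal N$. For $q=(q_1,q_2)\in\mathbb R^2$ define $q_{mn}=q_2-(\kappa_m+\kappa_n)q_1+\kappa_m\kappa_n$, $\widetilde q_{mn}=(\kappa_m-\kappa_n)q_{mn}$, $\rho_k(q)=\theta(\widetilde q_{k,k-N_a})\theta(\widetilde q_{k+N_a,k})$ ($\theta$ the Heaviside step function) and $P_m(q)=\prod_{k=m+N_a}^{m+N_b}\rho_k(q)$. Let $$\epsilon_m(q)=\prod_{k=m}^{m+N_b}\theta(\widetilde q_{k+N_a,k}).$$ Then $$\epsilon_m(q)=P_m(q)\quad\text{if } N_b\ge 2N_a-1,\qquad \epsilon_m(q)=P_m(q)\prod_{k=m+N_b-N_a+1}^{m+N_a-1}\theta(\widetilde q_{k+N_a,k})\quad\text{if } N_b<2N_a-1 .$$ Consequently the polygon with characteristic function $\epsilon_m$ is contained in the polygon with characteristic function $P_m$ and in the parabolic region $q_2\ge q_1^2$. Moreover, the polygon defined by $\epsilon_m$ is not void.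
   Context: Indices of $\kappa$ are read modulo $\mathcal N$, i.e. $\kappa_{l+\mathcal N}=\kappa_l$. The region defined by $P_m$ is a polygon inside the parabolic region $q_2\ge q_1^2$ with a vertex at $(\kappa_m,\kappa_m^2)$. *)

theory Defs
  imports "HOL-Analysis.Analysis"
begin

definition heaviside :: "real \<Rightarrow> real" where
  "heaviside x = (if 0 \<le> x then 1 else 0)"

definition qmn :: "(int \<Rightarrow> real) \<Rightarrow> int \<Rightarrow> int \<Rightarrow> real \<times> real \<Rightarrow> real" where
  "qmn \<kappa> m n q = snd q - (\<kappa> m + \<kappa> n) * fst q + \<kappa> m * \<kappa> n"

definition qt :: "(int \<Rightarrow> real) \<Rightarrow> int \<Rightarrow> int \<Rightarrow> real \<times> real \<Rightarrow> real" where
  "qt \<kappa> m n q = (\<kappa> m - \<kappa> n) * qmn \<kappa> m n q"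

definition rho :: "(int \<Rightarrow> real) \<Rightarrow> int \<Rightarrow> int \<Rightarrow> real \<times> real \<Rightarrow> real" where
  "rho \<kappa> Na k q = heaviside (qt \<kappa> k (k - Na) q) * heaviside (qt \<kappa> (k + Na) k q)"

definition Pm :: "(int \<Rightarrow> real) \<Rightarrow> int \<Rightarrow> int \<Rightarrow> int \<Rightarrow> real \<times> real \<Rightarrow> real" where
  "Pm \<kappa> Na Nb m q = (\<Prod>k\<in>{m + Na..m + Nb}. rho \<kappa> Na k q)"

definition epsm :: "(int \<Rightarrow> real) \<Rightarrow> int \<Rightarrow> int \<Rightarrow> int \<Rightarrow> real \<times> real \<Rightarrow> real" where
  "epsm \<kappa> Na Nb m q = (\<Prod>k\<in>{m..m + Nb}. heaviside (qt \<kappa> (k + Na) k q))"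

end

theory Submission
  imports Defs
begin

text \<open>Write \<open>q = (u, v)\<close> and \<open>w = v - u\<^sup>2\<close>. Then
  \<open>qt \<kappa> a b q = (\<kappa> a - \<kappa> b) * ((u - \<kappa> a) * (u - \<kappa> b) + w)\<close>, so the factor of \<open>epsm\<close> for
  \<open>k\<close> says that \<open>q\<close> lies above the chord of the parabola \<open>v = u\<^sup>2\<close> between the abscissae
  \<open>\<kappa> k < \<kappa> (k + Na)\<close>, or below it when the pair wraps around the period. The identities are
  bookkeeping: \<open>Pm\<close> imposes exactly the constraints of \<open>epsm\<close> for
  \<open>k \<in> [m, m + Nb - Na] \<union> [m + Na, m + Nb]\<close>.

  For the parabola, reduce \<open>m\<close> modulo \<open>Na + Nb\<close>. The non-wrapping chords of the block cover
  a range of abscissae, and above a chord whose range contains \<open>u\<close> one has \<open>w \<ge> 0\<close>; to the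
  left or right of that range, a non-wrapping and a wrapping chord of the block would demand
  incompatible bounds on \<open>w\<close>.

  For non-voidness, the vertex \<open>(\<kappa> m, (\<kappa> m)\<^sup>2)\<close> satisfies the constraints of the inner chords
  strictly, by the cyclic order of the \<open>\<kappa>\<close>'s, and lies on the two extreme chords; moving it
  slightly in a suitable direction makes all constraints strict, and they define an open set.\<close>

lemma prod_heaviside:
  assumes "finite A"
  shows "(\<Prod>k\<in>A. heaviside (f k)) = (if \<forall>k\<in>A. 0 \<le> f k then 1 else 0)"
  using assms by (induction A rule: finite_induct) (auto simp: heaviside_def)

lemma epsm_eq_indicator:
  "epsm \<kappa> Na Nb m q = (if \<forall>k\<in>{m..m + Nb}. 0 \<le> qt \<kappa> (k + Na) k q then 1 else 0)"
  unfolding epsm_def by (simp add: prod_heaviside)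

lemma Pm_eq_indicator:
  "Pm \<kappa> Na Nb m q =
     (if \<forall>k\<in>{m..m + Nb - Na} \<union> {m + Na..m + Nb}. 0 \<le> qt \<kappa> (k + Na) k q then 1 else 0)"
proof -
  have shift: "(\<forall>k\<in>{m + Na..m + Nb}. 0 \<le> qt \<kappa> k (k - Na) q)
      \<longleftrightarrow> (\<forall>k\<in>{m..m + Nb - Na}. 0 \<le> qt \<kappa> (k + Na) k q)"
  proof
    assume hyp: "\<forall>k\<in>{m + Na..m + Nb}. 0 \<le> qt \<kappa> k (k - Na) q"
    show "\<forall>k\<in>{m..m + Nb - Na}. 0 \<le> qt \<kappa> (k + Na) k q"
    proof
      fix k assume "k \<in> {m..m + Nb - Na}"
      then show "0 \<le> qt \<kappa> (k + Na) k q" using hyp[rule_format, of "k + Na"] by simp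
    qed
  next
    assume hyp: "\<forall>k\<in>{m..m + Nb - Na}. 0 \<le> qt \<kappa> (k + Na) k q"
    show "\<forall>k\<in>{m + Na..m + Nb}. 0 \<le> qt \<kappa> k (k - Na) q"
    proof
      fix k assume "k \<in> {m + Na..m + Nb}"
      then show "0 \<le> qt \<kappa> k (k - Na) q" using hyp[rule_format, of "k - Na"] by simp
    qed
  qed
  show ?thesis
    unfolding Pm_def rho_def prod.distrib by (simp add: prod_heaviside shift ball_Un)
qed

lemma epsm_eq_Pm_mult:
  assumes "0 \<le> Na" and "Na \<le> Nb"
  shows "epsm \<kappa> Na Nb m q =
    Pm \<kappa> Na Nb m q * (\<Prod>k\<in>{m + Nb - Na + 1..m + Na - 1}. heaviside (qt \<kappa> (k + Na) k q))"
proof -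
  have "{m..m + Nb} = ({m..m + Nb - Na} \<union> {m + Na..m + Nb}) \<union> {m + Nb - Na + 1..m + Na - 1}"
    using assms by auto
  then show ?thesis
    unfolding epsm_eq_indicator Pm_eq_indicator prod_heaviside[OF finite_atLeastAtMost_int]
    by (simp only: ball_Un) simp
qed

lemma periodic_add_mult:
  fixes f :: "int \<Rightarrow> 'a"
  assumes "\<And>l. f (l + N) = f l"
  shows "f (l + N * d) = f l"
proof (induction d arbitrary: l rule: int_induct[where k = 0])
  case (step1 i)
  then show ?case using assms[of "l + N * i"] by (simp add: algebra_simps)
next
  case (step2 i)
  then show ?case using assms[of "l + N * (i - 1)"] by (simp add: algebra_simps)
qed simp

lemma qt_eq_parabola:
  "qt \<kappa> a b q = (\<kappa> a - \<kappa> b) * ((fst q - \<kappa> a) * (fst q - \<kappa> b) + (snd q - (fst q)\<^sup>2))"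
  unfolding qt_def qmn_def by (simp add: algebra_simps power2_eq_square)

lemma nonneg_of_above_chord_containing:
  fixes a b u w :: real
  assumes "a < b" and "0 \<le> (b - a) * ((u - b) * (u - a) + w)" and "a \<le> u" and "u \<le> b"
  shows "0 \<le> w"
proof -
  have "0 \<le> (u - b) * (u - a) + w" using assms(1,2) by (simp add: zero_le_mult_iff)
  moreover have "(u - b) * (u - a) \<le> 0" using assms(3,4) by (simp add: mult_nonpos_nonneg)
  ultimately show ?thesis by linarith
qed

lemma chord_products_le:
  fixes a b s c u w :: real
  assumes "a < b" and "0 \<le> (b - a) * ((u - b) * (u - a) + w)"
    and "s < c" and "0 \<le> (s - c) * ((u - s) * (u - c) + w)"
  shows "(u - s) * (u - c) \<le> (u - b) * (u - a)"
proof -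
  have "0 \<le> (u - b) * (u - a) + w" using assms(1,2) by (simp add: zero_le_mult_iff)
  moreover have "(u - s) * (u - c) + w \<le> 0" using assms(3,4) by (simp add: zero_le_mult_iff)
  ultimately show ?thesis by linarith
qed

text \<open>Left of \<open>L\<close>, the chord over \<open>[L, b]\<close> and the wrapping chord over \<open>[s, c]\<close> demand
  incompatible bounds on \<open>w\<close>, and symmetrically right of \<open>R\<close> with the chord over \<open>[a, R]\<close>.\<close>

lemma nonneg_of_chord_cover:
  fixes L R b a s c u w :: real
  assumes cover: "L \<le> u \<Longrightarrow> u \<le> R \<Longrightarrow> 0 \<le> w"
    and left_chord: "L < b" "0 \<le> (b - L) * ((u - b) * (u - L) + w)"
    and right_chord: "a < R" "0 \<le> (R - a) * ((u - R) * (u - a) + w)"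
    and back_chord: "s < c" "0 \<le> (s - c) * ((u - s) * (u - c) + w)"
    and ordered: "L \<le> s" "s < a" "b < c" "c \<le> R"
  shows "0 \<le> w"
proof -
  consider "u < L" | "L \<le> u" "u \<le> R" | "R < u" by linarith
  then show ?thesis
  proof cases
    case 1
    have "(L - u) * (b - u) < (s - u) * (c - u)"
      using 1 ordered left_chord(1) by (intro mult_le_less_imp_less) auto
    then show ?thesis using chord_products_le[OF left_chord back_chord] by (simp add: algebra_simps)
  next
    case 3
    have "(u - R) * (u - a) < (u - c) * (u - s)"
      using 3 ordered right_chord(1) by (intro mult_le_less_imp_less) auto
    then show ?thesis using chord_products_le[OF right_chord back_chord] by (simp add: algebra_simps)
  qed (rule cover)
qed

lemma exists_chord_containing:
  fixes x :: "int \<Rightarrow> real"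
  assumes "mono_on {lo..hi} x" and "1 \<le> Na" and "lo + Na \<le> hi"
    and "x lo \<le> u" and "u \<le> x hi"
  shows "\<exists>p. lo \<le> p \<and> p + Na \<le> hi \<and> x p \<le> u \<and> u \<le> x (p + Na)"
proof -
  define A where "A = {p\<in>{lo..hi - Na}. x p \<le> u}"
  have "finite A" unfolding A_def by (rule finite_subset[of _ "{lo..hi - Na}"]) auto
  have "lo \<in> A" unfolding A_def using assms by auto
  define p where "p = Max A"
  have "p \<in> A" and p_max: "\<And>p'. p' \<in> A \<Longrightarrow> p' \<le> p"
    unfolding p_def using \<open>finite A\<close> \<open>lo \<in> A\<close> by (auto intro: Max_in)
  then have p: "lo \<le> p" "p + Na \<le> hi" "x p \<le> u" unfolding A_def by auto
  have "u \<le> x (p + Na)"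
  proof (cases "p + Na = hi")
    case False
    then have "p + 1 \<notin> A" and "p + 1 \<le> hi - Na" using p_max[of "p + 1"] p by auto
    then have "u < x (p + 1)" using p unfolding A_def by auto
    also have "x (p + 1) \<le> x (p + Na)"
      using p assms(2) by (intro mono_onD[OF assms(1)]) auto
    finally show ?thesis by simp
  qed (use assms in simp)
  then show ?thesis using p by blast
qed

lemma eventually_at_right_0_affine_pos:
  fixes c0 c1 :: real
  assumes "0 < c0 \<or> (c0 = 0 \<and> 0 < c1)"
  shows "\<forall>\<^sub>F t in at_right 0. 0 < c0 + t * c1"
  using assms
proof
  assume "0 < c0"
  have "((\<lambda>t. c0 + t * c1) \<longlongrightarrow> c0 + 0 * c1) (at_right 0)"
    by (intro tendsto_intros)
  then show ?thesis using \<open>0 < c0\<close> by (auto dest: order_tendstoD(1))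
next
  assume "c0 = 0 \<and> 0 < c1"
  then show ?thesis by (intro eventually_mono[OF eventually_at_right_less]) simp
qed

lemma open_qt_pos: "open {q. 0 < qt \<kappa> a b q}"
  unfolding qt_def qmn_def by (intro open_Collect_less continuous_intros)

lemma interior_epsm_nonempty_of_strict_point:
  assumes "\<forall>k\<in>{m..m + Nb}. 0 < qt \<kappa> (k + Na) k q"
  shows "interior {q. epsm \<kappa> Na Nb m q = 1} \<noteq> {}"
proof -
  define T where "T = (\<Inter>k\<in>{m..m + Nb}. {q. 0 < qt \<kappa> (k + Na) k q})"
  have "open T" unfolding T_def by (intro open_INT finite_atLeastAtMost_int ballI open_qt_pos)
  moreover have "T \<subseteq> {q. epsm \<kappa> Na Nb m q = 1}"
    unfolding T_def epsm_eq_indicator by (auto intro: less_imp_le)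
  ultimately have "T \<subseteq> interior {q. epsm \<kappa> Na Nb m q = 1}" by (rule interior_maximal[rotated])
  moreover have "q \<in> T" using assms unfolding T_def by blast
  ultimately show ?thesis by blast
qed

locale cyclic_nodes =
  fixes \<kappa> :: "int \<Rightarrow> real" and Na Nb :: int
  assumes Na_pos: "1 \<le> Na" and Na_less_Nb: "Na < Nb"
    and strict_mono: "strict_mono_on {1..Na + Nb} \<kappa>"
    and periodic: "\<And>l. \<kappa> (l + (Na + Nb)) = \<kappa> l"
begin

abbreviation N :: int where "N \<equiv> Na + Nb"

lemma kappa_less: "1 \<le> i \<Longrightarrow> i < j \<Longrightarrow> j \<le> N \<Longrightarrow> \<kappa> i < \<kappa> j"
  using strict_mono_onD[OF strict_mono] by auto

lemma kappa_le: "1 \<le> i \<Longrightarrow> i \<le> j \<Longrightarrow> j \<le> N \<Longrightarrow> \<kappa> i \<le> \<kappa> j"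
  using kappa_less[of i j] by (cases "i = j") auto

lemma kappa_diff_period: "\<kappa> (l - N) = \<kappa> l"
  using periodic[of "l - N"] by simp

lemma qt_add_period: "qt \<kappa> (a + N) (b + N) q = qt \<kappa> a b q"
  unfolding qt_def qmn_def by (simp add: periodic)

lemma epsm_add_period_mult: "epsm \<kappa> Na Nb (m + N * d) q = epsm \<kappa> Na Nb m q"
proof -
  have qt_shift: "qt \<kappa> (k + N * d + Na) (k + N * d) q = qt \<kappa> (k + Na) k q" for k
    using periodic_add_mult[of \<kappa> N, OF periodic, of "k + Na" d]
      periodic_add_mult[of \<kappa> N, OF periodic, of k d]
    by (simp add: qt_def qmn_def add_ac)
  have "(\<forall>k\<in>{m + N * d..m + N * d + Nb}. 0 \<le> qt \<kappa> (k + Na) k q)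
      \<longleftrightarrow> (\<forall>k\<in>{m..m + Nb}. 0 \<le> qt \<kappa> (k + Na) k q)"
  proof
    assume hyp: "\<forall>k\<in>{m + N * d..m + N * d + Nb}. 0 \<le> qt \<kappa> (k + Na) k q"
    show "\<forall>k\<in>{m..m + Nb}. 0 \<le> qt \<kappa> (k + Na) k q"
      using hyp[rule_format, of "_ + N * d"] qt_shift by (simp add: add_ac)
  next
    assume hyp: "\<forall>k\<in>{m..m + Nb}. 0 \<le> qt \<kappa> (k + Na) k q"
    show "\<forall>k\<in>{m + N * d..m + N * d + Nb}. 0 \<le> qt \<kappa> (k + Na) k q"
      using hyp[rule_format, of "_ - N * d"] qt_shift[of "_ - N * d"] by simp
  qed
  then show ?thesis unfolding epsm_eq_indicator by simp
qed

lemma parabola_of_forward_chords: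
  assumes "1 \<le> lo" "lo + Na \<le> hi" "hi \<le> N" "\<kappa> lo \<le> fst q" "fst q \<le> \<kappa> hi"
    and fwd: "\<And>p. lo \<le> p \<Longrightarrow> p + Na \<le> hi \<Longrightarrow> 0 \<le> qt \<kappa> (p + Na) p q"
  shows "0 \<le> snd q - (fst q)\<^sup>2"
proof -
  have "mono_on {lo..hi} \<kappa>" using kappa_le assms(1,3) by (intro mono_onI) auto
  then obtain p where p: "lo \<le> p" "p + Na \<le> hi" "\<kappa> p \<le> fst q" "fst q \<le> \<kappa> (p + Na)"
    using exists_chord_containing[OF _ Na_pos] assms(2,4,5) by blast
  have "\<kappa> p < \<kappa> (p + Na)" using kappa_less p assms(1,3) Na_pos by auto
  then show ?thesis
    using nonneg_of_above_chord_containing fwd[OF p(1,2)] p(3,4) unfolding qt_eq_parabola by blast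
qed

lemma parabola_of_block_high:
  assumes "Nb < r" "r \<le> N"
    and block: "\<And>k. r \<le> k \<Longrightarrow> k \<le> r + Nb \<Longrightarrow> 0 \<le> qt \<kappa> (k + Na) k q"
  shows "0 \<le> snd q - (fst q)\<^sup>2"
proof -
  have wrap: "0 \<le> qt \<kappa> (p + Na) p q" if "1 \<le> p" "p + Na \<le> r" for p
    using block[of "p + N"] qt_add_period[of "p + Na" p q] that assms(2) by (simp add: add_ac)
  have "\<kappa> (r + Na) = \<kappa> (r - Nb)" using kappa_diff_period[of "r + Na"] by simp
  show ?thesis
  proof (rule nonneg_of_chord_cover[where u = "fst q" and L = "\<kappa> 1" and R = "\<kappa> r"
        and b = "\<kappa> (1 + Na)" and a = "\<kappa> (r - Na)" and s = "\<kappa> (r + Na)" and c = "\<kappa> r"])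
    show "0 \<le> snd q - (fst q)\<^sup>2" if "\<kappa> 1 \<le> fst q" "fst q \<le> \<kappa> r"
      using parabola_of_forward_chords[of 1 r] wrap that assms(1,2) Na_pos Na_less_Nb by auto
    show "0 \<le> (\<kappa> (1 + Na) - \<kappa> 1) * ((fst q - \<kappa> (1 + Na)) * (fst q - \<kappa> 1) + (snd q - (fst q)\<^sup>2))"
      using wrap[of 1] assms(1) Na_less_Nb unfolding qt_eq_parabola by (simp add: add.commute)
    show "0 \<le> (\<kappa> r - \<kappa> (r - Na)) * ((fst q - \<kappa> r) * (fst q - \<kappa> (r - Na)) + (snd q - (fst q)\<^sup>2))"
      using wrap[of "r - Na"] assms(1) Na_less_Nb unfolding qt_eq_parabola by simp
    show "0 \<le> (\<kappa> (r + Na) - \<kappa> r) * ((fst q - \<kappa> (r + Na)) * (fst q - \<kappa> r) + (snd q - (fst q)\<^sup>2))"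
      using block[of r] Na_less_Nb Na_pos unfolding qt_eq_parabola by simp
  qed (use kappa_less kappa_le assms(1,2) \<open>\<kappa> (r + Na) = \<kappa> (r - Nb)\<close> Na_pos Na_less_Nb in auto)
qed

lemma parabola_of_block_mid:
  assumes "Na < r" "r \<le> Nb"
    and block: "\<And>k. r \<le> k \<Longrightarrow> k \<le> r + Nb \<Longrightarrow> 0 \<le> qt \<kappa> (k + Na) k q"
  shows "0 \<le> snd q - (fst q)\<^sup>2"
proof -
  have wrap: "0 \<le> qt \<kappa> (p + Na) p q" if "1 \<le> p" "p + Na \<le> r" for p
    using block[of "p + N"] qt_add_period[of "p + Na" p q] that assms(2) Na_pos by (simp add: add_ac)
  have "\<kappa> (N + Na) = \<kappa> Na" using periodic[of Na] by (simp add: add_ac)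
  show ?thesis
  proof (rule nonneg_of_chord_cover[where u = "fst q" and L = "\<kappa> 1" and R = "\<kappa> N"
        and b = "\<kappa> (1 + Na)" and a = "\<kappa> Nb" and s = "\<kappa> (N + Na)" and c = "\<kappa> N"])
    show "0 \<le> snd q - (fst q)\<^sup>2" if "\<kappa> 1 \<le> fst q" "fst q \<le> \<kappa> N"
    proof (cases "fst q \<le> \<kappa> r")
      case True
      then show ?thesis using parabola_of_forward_chords[of 1 r] wrap that assms Na_pos by auto
    next
      case False
      then show ?thesis using parabola_of_forward_chords[of r N] block that assms Na_pos by auto
    qed
    show "0 \<le> (\<kappa> (1 + Na) - \<kappa> 1) * ((fst q - \<kappa> (1 + Na)) * (fst q - \<kappa> 1) + (snd q - (fst q)\<^sup>2))"
      using wrap[of 1] assms(1) unfolding qt_eq_parabola by (simp add: add.commute)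
    show "0 \<le> (\<kappa> N - \<kappa> Nb) * ((fst q - \<kappa> N) * (fst q - \<kappa> Nb) + (snd q - (fst q)\<^sup>2))"
      using block[of Nb] assms Na_pos unfolding qt_eq_parabola by (simp add: add.commute)
    show "0 \<le> (\<kappa> (N + Na) - \<kappa> N) * ((fst q - \<kappa> (N + Na)) * (fst q - \<kappa> N) + (snd q - (fst q)\<^sup>2))"
      using block[of N] assms Na_pos unfolding qt_eq_parabola by simp
  qed (use kappa_less kappa_le \<open>\<kappa> (N + Na) = \<kappa> Na\<close> Na_pos Na_less_Nb in auto)
qed

lemma parabola_of_block_low:
  assumes "1 \<le> r" "r \<le> Na"
    and block: "\<And>k. r \<le> k \<Longrightarrow> k \<le> r + Nb \<Longrightarrow> 0 \<le> qt \<kappa> (k + Na) k q"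
  shows "0 \<le> snd q - (fst q)\<^sup>2"
proof -
  have "\<kappa> (r + Nb + Na) = \<kappa> r" using periodic[of r] by (simp add: add_ac)
  show ?thesis
  proof (rule nonneg_of_chord_cover[where u = "fst q" and L = "\<kappa> r" and R = "\<kappa> N"
        and b = "\<kappa> (r + Na)" and a = "\<kappa> Nb" and s = "\<kappa> (r + Nb + Na)" and c = "\<kappa> (r + Nb)"])
    show "0 \<le> snd q - (fst q)\<^sup>2" if "\<kappa> r \<le> fst q" "fst q \<le> \<kappa> N"
      using parabola_of_forward_chords[of r N] block that assms Na_less_Nb by auto
    show "0 \<le> (\<kappa> (r + Na) - \<kappa> r) * ((fst q - \<kappa> (r + Na)) * (fst q - \<kappa> r) + (snd q - (fst q)\<^sup>2))"
      using block[of r] Na_pos Na_less_Nb unfolding qt_eq_parabola by simp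
    show "0 \<le> (\<kappa> N - \<kappa> Nb) * ((fst q - \<kappa> N) * (fst q - \<kappa> Nb) + (snd q - (fst q)\<^sup>2))"
      using block[of Nb] assms Na_less_Nb unfolding qt_eq_parabola by (simp add: add.commute)
    show "0 \<le> (\<kappa> (r + Nb + Na) - \<kappa> (r + Nb))
        * ((fst q - \<kappa> (r + Nb + Na)) * (fst q - \<kappa> (r + Nb)) + (snd q - (fst q)\<^sup>2))"
      using block[of "r + Nb"] Na_pos Na_less_Nb unfolding qt_eq_parabola by simp
  qed (use kappa_less kappa_le \<open>\<kappa> (r + Nb + Na) = \<kappa> r\<close> assms Na_pos Na_less_Nb in auto)
qed

lemma parabola_of_block:
  assumes "1 \<le> r" "r \<le> N"
    and "\<And>k. r \<le> k \<Longrightarrow> k \<le> r + Nb \<Longrightarrow> 0 \<le> qt \<kappa> (k + Na) k q"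
  shows "(fst q)\<^sup>2 \<le> snd q"
proof -
  consider "Nb < r" | "Na < r" "r \<le> Nb" | "r \<le> Na" by linarith
  then have "0 \<le> snd q - (fst q)\<^sup>2"
    using parabola_of_block_high parabola_of_block_mid parabola_of_block_low assms by cases blast+
  then show ?thesis by simp
qed

lemma cyclic_order_sign:
  assumes "1 \<le> r" "r \<le> N" "r < x" "x < y" "y < r + N"
  shows "0 < (\<kappa> y - \<kappa> x) * ((\<kappa> r - \<kappa> x) * (\<kappa> r - \<kappa> y))"
proof -
  consider "y \<le> N" | "x \<le> N" "N < y" | "N < x" using assms by linarith
  then show ?thesis
  proof cases
    case 1
    then have "\<kappa> r < \<kappa> x" "\<kappa> x < \<kappa> y" using kappa_less assms by auto
    then show ?thesis by (simp add: mult_pos_pos mult_neg_neg)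
  next
    case 2
    then have "\<kappa> r < \<kappa> x \<or> r = x" "\<kappa> (y - N) < \<kappa> r" using kappa_less assms by auto
    then have "\<kappa> r < \<kappa> x" "\<kappa> y < \<kappa> r" using assms kappa_diff_period[of y] by auto
    then show ?thesis by (simp add: mult_neg_pos mult_neg_neg)
  next
    case 3
    then have "\<kappa> (x - N) < \<kappa> (y - N)" "\<kappa> (y - N) < \<kappa> r" using kappa_less assms by auto
    then have "\<kappa> x < \<kappa> y" "\<kappa> y < \<kappa> r" using kappa_diff_period[of x] kappa_diff_period[of y] by auto
    then show ?thesis by (simp add: mult_pos_pos mult_neg_neg)
  qed
qed

lemma exists_strict_point_of_block:
  assumes "1 \<le> r" "r \<le> N"
  shows "\<exists>q. \<forall>k\<in>{r..r + Nb}. 0 < qt \<kappa> (k + Na) k q"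
proof -
  define K X Y where "K = \<kappa> r" and "X = \<kappa> (r + Na)" and "Y = \<kappa> (r + Nb)"
  have "0 < (Y - X) * ((K - X) * (K - Y))"
    using cyclic_order_sign[of r "r + Na" "r + Nb"] assms Na_pos Na_less_Nb
    unfolding K_def X_def Y_def by simp
  then have "Y \<noteq> X" "K \<noteq> X" "K \<noteq> Y" by auto
  \<comment> \<open>The direction \<open>(d1, d2)\<close> is chosen so that the constraints of the two chords through
    the vertex \<open>(K, K\<^sup>2)\<close> grow at the rates \<open>(X - K)\<^sup>2\<close> and \<open>(K - Y)\<^sup>2\<close>.\<close>
  define d1 where "d1 = (X + Y - 2 * K) / (Y - X)"
  define d2 where "d2 = (X - K) + (K + X) * d1"
  define Q where "Q t = (K + t * d1, K\<^sup>2 + t * d2)" for t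
  have qt_Q: "qt \<kappa> a b (Q t) = (\<kappa> a - \<kappa> b) * ((K - \<kappa> a) * (K - \<kappa> b))
      + t * ((\<kappa> a - \<kappa> b) * (d2 - (\<kappa> a + \<kappa> b) * d1))" for a b t
    unfolding Q_def qt_def qmn_def by (simp add: algebra_simps power2_eq_square)
  have "(Y - X) * d1 = X + Y - 2 * K" using \<open>Y \<noteq> X\<close> by (simp add: d1_def)
  then have slope_Y: "d2 - (K + Y) * d1 = K - Y" unfolding d2_def by algebra
  have "\<forall>\<^sub>F t in at_right 0. \<forall>k\<in>{r..r + Nb}. 0 < qt \<kappa> (k + Na) k (Q t)"
  proof (intro eventually_ball_finite ballI finite_atLeastAtMost_int)
    fix k assume "k \<in> {r..r + Nb}"
    then consider "k = r" | "k = r + Nb" | "r < k" "k < r + Nb" by fastforce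
    then show "\<forall>\<^sub>F t in at_right 0. 0 < qt \<kappa> (k + Na) k (Q t)"
    proof cases
      case 1
      show ?thesis unfolding qt_Q 1 K_def[symmetric] X_def[symmetric] using \<open>K \<noteq> X\<close>
        by (intro eventually_at_right_0_affine_pos) (auto simp: d2_def add.commute zero_less_mult_iff)
    next
      case 2
      have "\<kappa> (r + Nb + Na) = K" using periodic[of r] unfolding K_def by (simp add: add_ac)
      then show ?thesis unfolding qt_Q 2 Y_def[symmetric] using \<open>K \<noteq> Y\<close>
        by (intro eventually_at_right_0_affine_pos) (auto simp: slope_Y zero_less_mult_iff)
    next
      case 3
      have "0 < (\<kappa> (k + Na) - \<kappa> k) * ((K - \<kappa> k) * (K - \<kappa> (k + Na)))"
        using cyclic_order_sign[of r k "k + Na"] assms Na_pos 3 unfolding K_def by simp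
      then show ?thesis unfolding qt_Q
        by (intro eventually_at_right_0_affine_pos) (simp add: mult.commute)
    qed
  qed
  then show ?thesis using eventually_happens'[OF trivial_limit_at_right_real] by blast
qed

end

theorem lemma5p2:
  fixes \<kappa> :: "int \<Rightarrow> real" and Na Nb m :: int
  assumes "1 \<le> Na" and "Na < Nb"
    and "strict_mono_on {1..Na + Nb} \<kappa>"
    and "\<And>l. \<kappa> (l + (Na + Nb)) = \<kappa> l"
  shows "(Nb \<ge> 2 * Na - 1 \<longrightarrow> (\<forall>q. epsm \<kappa> Na Nb m q = Pm \<kappa> Na Nb m q))
       \<and> (Nb < 2 * Na - 1 \<longrightarrow> (\<forall>q. epsm \<kappa> Na Nb m q =
             Pm \<kappa> Na Nb m q * (\<Prod>k\<in>{m + Nb - Na + 1..m + Na - 1}. heaviside (qt \<kappa> (k + Na) k q))))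
       \<and> {q. epsm \<kappa> Na Nb m q = 1} \<subseteq> {q. Pm \<kappa> Na Nb m q = 1}
       \<and> {q. epsm \<kappa> Na Nb m q = 1} \<subseteq> {q. (fst q)\<^sup>2 \<le> snd q}
       \<and> interior {q. epsm \<kappa> Na Nb m q = 1} \<noteq> {}"
proof -
  have nodes: "cyclic_nodes \<kappa> Na Nb" using assms by unfold_locales
  have factor: "epsm \<kappa> Na Nb m q =
      Pm \<kappa> Na Nb m q * (\<Prod>k\<in>{m + Nb - Na + 1..m + Na - 1}. heaviside (qt \<kappa> (k + Na) k q))" for q
    using assms(1,2) by (intro epsm_eq_Pm_mult) auto
  define r where "r = (m - 1) mod (Na + Nb) + 1"
  have "0 \<le> (m - 1) mod (Na + Nb)" "(m - 1) mod (Na + Nb) < Na + Nb" using assms(1,2) by simp_all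
  then have r: "1 \<le> r" "r \<le> Na + Nb" unfolding r_def by linarith+
  have "m = r + (Na + Nb) * ((m - 1) div (Na + Nb))" unfolding r_def by simp
  then have "epsm \<kappa> Na Nb m q = epsm \<kappa> Na Nb r q" for q
    using cyclic_nodes.epsm_add_period_mult[OF nodes, of r "(m - 1) div (Na + Nb)" q] by simp
  then have region: "{q. epsm \<kappa> Na Nb m q = 1} = {q. epsm \<kappa> Na Nb r q = 1}" by simp
  obtain q0 where q0: "\<forall>k\<in>{r..r + Nb}. 0 < qt \<kappa> (k + Na) k q0"
    using cyclic_nodes.exists_strict_point_of_block[OF nodes r] by blast
  have "{q. epsm \<kappa> Na Nb m q = 1} \<subseteq> {q. (fst q)\<^sup>2 \<le> snd q}"
    unfolding region using cyclic_nodes.parabola_of_block[OF nodes r]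
    by (auto simp: epsm_eq_indicator split: if_splits)
  moreover have "{q. epsm \<kappa> Na Nb m q = 1} \<subseteq> {q. Pm \<kappa> Na Nb m q = 1}"
    using factor by (auto simp: Pm_eq_indicator prod_heaviside split: if_splits)
  moreover have "interior {q. epsm \<kappa> Na Nb m q = 1} \<noteq> {}"
    unfolding region by (rule interior_epsm_nonempty_of_strict_point[OF q0])
  moreover have "{m + Nb - Na + 1..m + Na - 1} = {}" if "2 * Na - 1 \<le> Nb" using that by simp
  ultimately show ?thesis using factor by simp
qed

end
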